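(* Let $G^c$ be a vertex-coloured graph with $n$ vertices and $c$ colours whose minimum degree satisfies $\delta(G^c)>(n-1)-\sqrt{n-1}$. Then $\gamma^t(G^c)\le c+1$.
   Context: A vertex-coloured graph $G^c$ with colour set $\{1,\dots,c\}$ is a finite simple graph in which every vertex receives exactly one colour and every colour appears on at least one vertex. A dominating set is tropical if every colour appears on at least one of its vertices; $\gamma^t(G^c)$ is the minimum size of a tropical dominating set. *)

theory Defs
  imports Complex_Main
begin

definition simple_graph :: "'a set \<Rightarrow> ('a \<Rightarrow> 'a \<Rightarrow> bool) \<Rightarrow> bool" where
  "simple_graph V E \<longleftrightarrow> finite V \<and> (\<forall>u v. E u v \<longrightarrow> u \<in> V \<and> v \<in> V)
     \<and> (\<forall>u v. E u v \<longrightarrow> E v u) \<and> (\<forall>v. \<not> E v v)"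

definition vertex_coloured :: "'a set \<Rightarrow> ('a \<Rightarrow> nat) \<Rightarrow> nat \<Rightarrow> bool" where
  "vertex_coloured V col c \<longleftrightarrow> col ` V = {1..c}"

definition degree :: "'a set \<Rightarrow> ('a \<Rightarrow> 'a \<Rightarrow> bool) \<Rightarrow> 'a \<Rightarrow> nat" where
  "degree V E v = card {u \<in> V. E v u}"

definition min_degree :: "'a set \<Rightarrow> ('a \<Rightarrow> 'a \<Rightarrow> bool) \<Rightarrow> nat" where
  "min_degree V E = Min (degree V E ` V)"

definition dominating_set :: "'a set \<Rightarrow> ('a \<Rightarrow> 'a \<Rightarrow> bool) \<Rightarrow> 'a set \<Rightarrow> bool" where
  "dominating_set V E D \<longleftrightarrow> D \<subseteq> V \<and> (\<forall>v \<in> V. v \<in> D \<or> (\<exists>u \<in> D. E v u))"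

definition tropical_dominating_set ::
    "'a set \<Rightarrow> ('a \<Rightarrow> 'a \<Rightarrow> bool) \<Rightarrow> ('a \<Rightarrow> nat) \<Rightarrow> nat \<Rightarrow> 'a set \<Rightarrow> bool" where
  "tropical_dominating_set V E col c D \<longleftrightarrow> dominating_set V E D \<and> {1..c} \<subseteq> col ` D"

definition tropical_domination_number ::
    "'a set \<Rightarrow> ('a \<Rightarrow> 'a \<Rightarrow> bool) \<Rightarrow> ('a \<Rightarrow> nat) \<Rightarrow> nat \<Rightarrow> nat" where
  "tropical_domination_number V E col c =
     Min {card D | D. tropical_dominating_set V E col c D}"

end

theory Submission
  imports Defs
begin

text \<open>Pick one vertex of each colour; this set S has at most c vertices. Every vertex
  not dominated by S is, by symmetry, a non-neighbour of a fixed vertex of S, so there are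
  at most K = (n - 1) - \<delta> of them, and each of them has at most K non-neighbours. The
  degree bound gives K * K \<le> n - 1, so some vertex x is equal or adjacent to every vertex
  not dominated by S, and S \<union> {x} is a tropical dominating set of size at most c + 1.\<close>

definition non_neighbours :: "'a set \<Rightarrow> ('a \<Rightarrow> 'a \<Rightarrow> bool) \<Rightarrow> 'a \<Rightarrow> 'a set" where
  "non_neighbours V E v = {u \<in> V. u \<noteq> v \<and> \<not> E v u}"

definition undominated :: "'a set \<Rightarrow> ('a \<Rightarrow> 'a \<Rightarrow> bool) \<Rightarrow> 'a set \<Rightarrow> 'a set" where
  "undominated V E S = {v \<in> V. v \<notin> S \<and> (\<forall>s \<in> S. \<not> E v s)}"

lemma card_non_neighbours:
  assumes "simple_graph V E" and "v \<in> V"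
  shows "card (non_neighbours V E v) = card V - 1 - degree V E v"
proof -
  have fin: "finite V" using assms(1) unfolding simple_graph_def by blast
  have "{u \<in> V. E v u} \<subseteq> V - {v}"
    using assms(1) unfolding simple_graph_def by blast
  moreover have "non_neighbours V E v = (V - {v}) - {u \<in> V. E v u}"
    unfolding non_neighbours_def by blast
  ultimately show ?thesis
    using fin assms(2) by (simp add: card_Diff_subset degree_def)
qed

lemma card_non_neighbours_le:
  assumes "simple_graph V E" and "v \<in> V"
  shows "card (non_neighbours V E v) \<le> card V - 1 - min_degree V E"
proof -
  have "finite V" using assms(1) unfolding simple_graph_def by blast
  then have "min_degree V E \<le> degree V E v"
    using assms(2) unfolding min_degree_def by simp
  then show ?thesis using card_non_neighbours[OF assms] by simp
qed

lemma undominated_subset_non_neighbours: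
  assumes "\<And>u w. E u w \<Longrightarrow> E w u" and "v \<in> S"
  shows "undominated V E S \<subseteq> non_neighbours V E v"
  using assms unfolding undominated_def non_neighbours_def by blast

lemma ex_common_closed_neighbour:
  assumes "finite V" and "U \<subseteq> V"
    and "(\<Sum>u\<in>U. card (non_neighbours V E u)) < card V"
  shows "\<exists>x \<in> V. \<forall>u \<in> U. u = x \<or> E u x"
proof -
  let ?B = "\<Union>u\<in>U. non_neighbours V E u"
  have "card ?B < card V"
    using card_UN_le[OF finite_subset[OF assms(2,1)], of "non_neighbours V E"] assms(3)
    by linarith
  moreover have "?B \<subseteq> V" unfolding non_neighbours_def by blast
  ultimately have "?B \<noteq> V" by auto
  with \<open>?B \<subseteq> V\<close> obtain x where "x \<in> V" "x \<notin> ?B" by blast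
  then show ?thesis
    using assms(2) unfolding non_neighbours_def by blast
qed

lemma dominating_set_insert_undominated:
  assumes "S \<subseteq> V" and "x \<in> V" and "\<forall>u \<in> undominated V E S. u = x \<or> E u x"
  shows "dominating_set V E (insert x S)"
  using assms unfolding dominating_set_def undominated_def by blast

lemma ex_transversal:
  "\<exists>S \<subseteq> A. f ` S = f ` A \<and> card S = card (f ` A)"
proof (intro exI conjI)
  let ?S = "inv_into A f ` f ` A"
  show "?S \<subseteq> A" by (auto intro: inv_into_into)
  show "f ` ?S = f ` A" by (simp add: image_inv_into_cancel)
  show "card ?S = card (f ` A)" by (simp add: card_image inj_on_inv_into)
qed

lemma tropical_domination_number_le:
  assumes "finite V" and "tropical_dominating_set V E col c D"
  shows "tropical_domination_number V E col c \<le> card D"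
proof -
  have "{card D | D. tropical_dominating_set V E col c D} \<subseteq> {0..card V}"
    using assms(1) unfolding tropical_dominating_set_def dominating_set_def
    by (auto intro: card_mono)
  then show ?thesis
    unfolding tropical_domination_number_def using assms(2)
    by (intro Min_le) (auto intro: finite_subset)
qed

lemma sq_deficiency_le:
  fixes m d :: nat
  assumes "real m - sqrt (real m) < real d"
  shows "(m - d) * (m - d) \<le> m"
proof (cases "d \<le> m")
  case True
  then have "real (m - d) < sqrt (real m)" using assms by (simp add: of_nat_diff)
  then have "real (m - d) * real (m - d) < sqrt (real m) * sqrt (real m)"
    by (intro mult_strict_mono') auto
  then show ?thesis by (simp flip: of_nat_mult)
qed simp

lemma card_undominated_le:
  assumes "simple_graph V E" and "S \<subseteq> V" and "v \<in> S"
  shows "card (undominated V E S) \<le> card V - 1 - min_degree V E"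
proof -
  have "finite V" and "\<And>u w. E u w \<Longrightarrow> E w u"
    using assms(1) unfolding simple_graph_def by blast+
  then have "card (undominated V E S) \<le> card (non_neighbours V E v)"
    using undominated_subset_non_neighbours[of E v S V] assms(3)
    by (intro card_mono) (auto simp: non_neighbours_def)
  also have "\<dots> \<le> card V - 1 - min_degree V E"
    using card_non_neighbours_le[OF assms(1)] assms(2,3) by blast
  finally show ?thesis .
qed

lemma sum_card_non_neighbours_undominated_le:
  assumes "simple_graph V E" and "S \<subseteq> V" and "v \<in> S"
  defines "K \<equiv> card V - 1 - min_degree V E"
  shows "(\<Sum>u\<in>undominated V E S. card (non_neighbours V E u)) \<le> K * K"
proof -
  have "(\<Sum>u\<in>undominated V E S. card (non_neighbours V E u)) \<le> card (undominated V E S) * K"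
    using sum_bounded_above[of "undominated V E S" "\<lambda>u. card (non_neighbours V E u)" K]
      card_non_neighbours_le[OF assms(1)]
    unfolding K_def undominated_def by auto
  also have "\<dots> \<le> K * K"
    using card_undominated_le[OF assms(1-3)] unfolding K_def by simp
  finally show ?thesis .
qed

theorem mainTheorem8:
  fixes V :: "'a set" and E :: "'a \<Rightarrow> 'a \<Rightarrow> bool" and col :: "'a \<Rightarrow> nat" and c :: nat
  assumes "simple_graph V E"
    and "V \<noteq> {}"
    and "vertex_coloured V col c"
    and "real (min_degree V E) > real (card V - 1) - sqrt (real (card V - 1))"
  shows "tropical_domination_number V E col c \<le> c + 1"
proof -
  have fin: "finite V" using assms(1) unfolding simple_graph_def by blast
  obtain S where S: "S \<subseteq> V" "col ` S = {1..c}" "card S = c"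
    using ex_transversal[of V col] assms(3) unfolding vertex_coloured_def by auto
  moreover have "col ` V \<noteq> {}" using assms(2) by blast
  ultimately obtain v where "v \<in> S"
    using assms(3) unfolding vertex_coloured_def by fastforce
  have "card V > 0" using assms(2) fin by (simp add: card_gt_0_iff)
  then have "(\<Sum>u\<in>undominated V E S. card (non_neighbours V E u)) < card V"
    using sum_card_non_neighbours_undominated_le[OF assms(1) S(1) \<open>v \<in> S\<close>]
      sq_deficiency_le[OF assms(4)] by linarith
  moreover have "undominated V E S \<subseteq> V" unfolding undominated_def by blast
  ultimately obtain x where x: "x \<in> V" "\<forall>u \<in> undominated V E S. u = x \<or> E u x"
    using ex_common_closed_neighbour[OF fin] by blast
  have "tropical_dominating_set V E col c (insert x S)"
    using dominating_set_insert_undominated[OF S(1) x] S(2)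
    unfolding tropical_dominating_set_def by auto
  moreover have "card (insert x S) \<le> c + 1"
    using S(1,3) finite_subset[OF S(1) fin] by (simp add: card_insert_if)
  ultimately show ?thesis
    using tropical_domination_number_le[OF fin] by (meson le_trans)
qed

end
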